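(* Let $T$ be a tree with at least $3$ vertices. Then $1+\min_{v\in V(T)} f_{T,v}(v)=\max_{v\in V(T)} f_{T,v}(v)$, and the player in the $Z_1$-Game on $T$ has a strategy that fills all vertices, regardless of the oracle's responses, using at most this many tokens; that is, $Z_1(T)\le 1+\min_{v} f_{T,v}(v)$.
   Context: Filling rule: if a filled vertex has exactly one unfilled neighbor (and any number of filled neighbors), that neighbor becomes filled; "applying the filling rule in a subgraph $H$" means applying it with neighborhoods taken in $H$. The $Z_q$-Game on $G$ ($q\ge 0$ an integer): initially all vertices are unfilled; a player repeatedly performs one of the following operations until all vertices are filled: (1) for one token, change any vertex from unfilled to filled; (2) at no cost, apply the filling rule in $G$; (3) if $F$ is the current set of filled vertices and $U_1,\dots,U_k$ are the vertex sets of the connected components of $G[V(G)\setminus F]$ with $k\ge q+1$, the player announces a selection of at least $q+1$ of the $U_i$ to an oracle (an adversary), the oracle returns a nonempty subset $\{U_{i_1},\dots,U_{i_\ell}\}$ of the selected components, and the player may at no cost apply the filling rule in $G[F\cup U_{i_1}\cup\cdots\cup U_{i_\ell}]$. $Z_q(G)$ is the minimum number of tokens with which the player can guarantee that all vertices become filled, regardless of the oracle's responses. For a tree $T$ rooted at $v$, the values $f_{T,v}(w)$, $w\in V(T)$, are defined recursively: if $w$ has no children (no descendants) in the rooted tree, $f_{T,v}(w)=0$; otherwise let $u_0,\dots,u_k$ be the children of $w$, let $T_i$ be the subtree consisting of $u_i$ and all its descendants, rooted at $u_i$, and order them so that $c_i:=f_{T_i,u_i}(u_i)$ satisfy $c_0\ge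 c_1\ge\cdots\ge c_k$; then $f_{T,v}(w)=\max_{0\le i\le k}(i+c_i)$. *)

theory Defs
  imports Main "HOL-Library.Multiset"
begin

definition is_cycle :: "('a \<Rightarrow> 'a \<Rightarrow> bool) \<Rightarrow> 'a list \<Rightarrow> bool" where
  "is_cycle E cs \<longleftrightarrow> distinct cs \<and> length cs \<ge> 3 \<and>
     (\<forall>i < length cs. E (cs ! i) (cs ! ((i + 1) mod length cs)))"

definition is_tree :: "'a set \<Rightarrow> ('a \<Rightarrow> 'a \<Rightarrow> bool) \<Rightarrow> bool" where
  "is_tree V E \<longleftrightarrow> finite V \<and> V \<noteq> {} \<and>
     (\<forall>x y. E x y \<longrightarrow> x \<in> V \<and> y \<in> V) \<and>
     (\<forall>x y. E x y \<longrightarrow> E y x) \<and> (\<forall>x. \<not> E x x) \<and>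
     (\<forall>x\<in>V. \<forall>y\<in>V. E\<^sup>*\<^sup>* x y) \<and>
     (\<nexists>cs. is_cycle E cs)"

definition fcomb :: "nat multiset \<Rightarrow> nat" where
  "fcomb M = (let cs = rev (sorted_list_of_multiset M) in
     if cs = [] then 0 else Max {i + cs ! i | i. i < length cs})"

text \<open>ftree E n p w: the value at w in the tree rooted so that p is the parent
of w (None if w is the root); children of w are its neighbours other than the
parent. n is a recursion fuel, which is irrelevant once n exceeds the depth.\<close>

fun ftree :: "('a \<Rightarrow> 'a \<Rightarrow> bool) \<Rightarrow> nat \<Rightarrow> 'a option \<Rightarrow> 'a \<Rightarrow> nat" where
  "ftree E 0 p w = 0"
| "ftree E (Suc n) p w =
     fcomb (image_mset (ftree E n (Some w)) (mset_set {u. E w u \<and> Some u \<noteq> p}))"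

text \<open>f_{T,v}(v): the value at the root v of T rooted at v (fuel card V
exceeds every depth in the tree).\<close>

definition froot :: "'a set \<Rightarrow> ('a \<Rightarrow> 'a \<Rightarrow> bool) \<Rightarrow> 'a \<Rightarrow> nat" where
  "froot V E v = ftree E (card V) None v"

definition comp_of :: "('a \<Rightarrow> 'a \<Rightarrow> bool) \<Rightarrow> 'a set \<Rightarrow> 'a \<Rightarrow> 'a set" where
  "comp_of E S x = {y. (\<lambda>a b. a \<in> S \<and> b \<in> S \<and> E a b)\<^sup>*\<^sup>* x y}"

definition components :: "('a \<Rightarrow> 'a \<Rightarrow> bool) \<Rightarrow> 'a set \<Rightarrow> 'a set set" where
  "components E S = comp_of E S ` S"

definition can_fill :: "('a \<Rightarrow> 'a \<Rightarrow> bool) \<Rightarrow> 'a set \<Rightarrow> 'a set \<Rightarrow> 'a \<Rightarrow> bool" where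
  "can_fill E H F u \<longleftrightarrow> u \<in> H - F \<and>
     (\<exists>w\<in>F. E w u \<and> (\<forall>x\<in>H - F. E w x \<longrightarrow> x = u))"

text \<open>zq_win V E q k F: from filled set F, the player can guarantee that all
vertices get filled spending at most k further tokens, whatever the adversary answers.\<close>

inductive zq_win :: "'a set \<Rightarrow> ('a \<Rightarrow> 'a \<Rightarrow> bool) \<Rightarrow> nat \<Rightarrow> nat \<Rightarrow> 'a set \<Rightarrow> bool"
  for V E q where
  finished: "V \<subseteq> F \<Longrightarrow> zq_win V E q k F"
| token: "v \<in> V \<Longrightarrow> v \<notin> F \<Longrightarrow> zq_win V E q k (insert v F) \<Longrightarrow> zq_win V E q (Suc k) F"
| fill: "can_fill E V F u \<Longrightarrow> zq_win V E q k (insert u F) \<Longrightarrow> zq_win V E q k F"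
| adversary: "Sel \<subseteq> components E (V - F) \<Longrightarrow> card Sel \<ge> q + 1 \<Longrightarrow>
    (\<forall>R. R \<subseteq> Sel \<and> R \<noteq> {} \<longrightarrow>
        (\<exists>u. can_fill E (F \<union> \<Union>R) F u \<and> zq_win V E q k (insert u F))) \<Longrightarrow>
    zq_win V E q k F"

definition Zq :: "'a set \<Rightarrow> ('a \<Rightarrow> 'a \<Rightarrow> bool) \<Rightarrow> nat \<Rightarrow> nat" where
  "Zq V E q = (LEAST k. zq_win V E q k {})"

end

theory Submission
  imports Defs "HOL-Library.Transitive_Closure_Table"
begin

text \<open>
  For an edge \<open>xu\<close> let \<open>b(x,u)\<close> be the value \<open>f\<close> at \<open>u\<close> of the branch of \<open>T - x\<close> containing \<open>u\<close>,
  rooted at \<open>u\<close>. Then \<open>f\<^sub>T\<^sub>,\<^sub>v(v)\<close> combines the values \<open>b(v,u)\<close> over the neighbours \<open>u\<close> of \<open>v\<close>,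
  and \<open>b(x,u)\<close> combines the values \<open>b(u,c)\<close> over the children \<open>c\<close> of \<open>u\<close>. Adding a value \<open>c\<close> to a
  combination of value \<open>g\<close> gives at most \<open>max (g + 1) c\<close>; propagated along branches this yields
  \<open>f(y) \<le> f(x) + 1\<close> for all \<open>x, y\<close>. Conversely, walking from a minimiser of \<open>f\<close> into heaviest
  branches, the value looking back stays below \<open>min f\<close>, so the walk reaches a vertex with a
  larger value (if \<open>min f = 0\<close>, any vertex with two neighbours has \<open>f \<ge> 1\<close>).

  In the game one token fills a minimiser, and the player keeps the filled set \<open>F\<close> connected with
  the demand of each filled vertex (the combination of \<open>b(x,u)\<close> over its unfilled neighbours \<open>u\<close>)
  at most the number of remaining tokens. If two filled vertices border the unfilled part, the
  oracle is asked about an unfilled component at each, and any answer lets a vertex be forced.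
  Otherwise a single vertex \<open>y\<close> borders it, and a token goes to a vertex \<open>z\<close> deep in the heaviest
  unfilled branch at \<open>y\<close>, chosen so that all demands drop below the current bound once \<open>z\<close> is
  joined to \<open>F\<close>. Until then \<open>F\<close> consists of the clusters of \<open>y\<close> and \<open>z\<close>, and forcing or an oracle
  query across the gap between them fills one more vertex.
\<close>

section \<open>The combination of child values\<close>

lemma finite_ex_max_on:
  fixes g :: "'a \<Rightarrow> 'b::linorder"
  assumes "finite A" "A \<noteq> {}"
  obtains a where "a \<in> A" "\<And>b. b \<in> A \<Longrightarrow> g b \<le> g a"
proof -
  have "Max (g ` A) \<in> g ` A"
    using assms by simp
  then obtain a where "a \<in> A" "Max (g ` A) = g a"
    by blast
  then show ?thesis
    using that assms by (metis Max_ge finite_imageI image_eqI)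
qed

lemma fcomb_empty [simp]: "fcomb {#} = 0"
  by (simp add: fcomb_def)

lemma fcomb_le_iff:
  "fcomb M \<le> t \<longleftrightarrow> (\<forall>i < size M. i + rev (sorted_list_of_multiset M) ! i \<le> t)"
proof (cases "M = {#}")
  case False
  define cs where "cs = rev (sorted_list_of_multiset M)"
  have len: "length cs = size M"
    by (metis cs_def length_rev mset_sorted_list_of_multiset size_mset)
  with False have "finite {i + cs ! i |i. i < length cs}" "{i + cs ! i |i. i < length cs} \<noteq> {}"
    by (auto simp: nonempty_has_size intro!: exI[of _ 0])
  with len False show ?thesis
    by (auto simp: fcomb_def Let_def cs_def[symmetric] Max_le_iff)
qed simp

lemma rev_sorted_list_of_multiset_add_mset_max:
  "\<forall>x\<in>#N. x \<le> c \<Longrightarrow>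
    rev (sorted_list_of_multiset (add_mset c N)) = c # rev (sorted_list_of_multiset N)"
  by (simp add: sorted_insort_is_snoc)

lemma fcomb_add_mset_le_Suc_iff:
  assumes "\<forall>x\<in>#N. x \<le> c"
  shows "fcomb (add_mset c N) \<le> Suc s \<longleftrightarrow> c \<le> Suc s \<and> fcomb N \<le> s"
  unfolding fcomb_le_iff rev_sorted_list_of_multiset_add_mset_max[OF assms]
  by (auto simp: less_Suc_eq_0_disj)

lemma fcomb_le_0_iff:
  assumes "\<forall>x\<in>#N. x \<le> c"
  shows "fcomb (add_mset c N) \<le> 0 \<longleftrightarrow> c = 0 \<and> N = {#}"
  unfolding fcomb_le_iff rev_sorted_list_of_multiset_add_mset_max[OF assms]
proof (intro iffI)
  assume "\<forall>i<size (add_mset c N). i + (c # rev (sorted_list_of_multiset N)) ! i \<le> 0"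
  from this[rule_format, of 0] this[rule_format, of 1] show "c = 0 \<and> N = {#}"
    by (cases "N = {#}") auto
qed auto

lemma fcomb_add_mset_max:
  assumes "\<forall>x\<in>#N. x \<le> c"
  shows "fcomb (add_mset c N) = (if N = {#} then c else max c (Suc (fcomb N)))"
    (is "?l = ?r")
proof -
  have "?l \<le> t \<longleftrightarrow> ?r \<le> t" for t
    using fcomb_le_0_iff[OF assms] fcomb_add_mset_le_Suc_iff[OF assms]
    by (cases t) auto
  from this[of ?l] this[of ?r] show ?thesis
    by simp
qed

definition few_above :: "nat multiset \<Rightarrow> nat \<Rightarrow> bool" where
  "few_above M t \<longleftrightarrow> (\<forall>j. size (filter_mset (\<lambda>x. t < x + j) M) \<le> j)"

lemma few_above_empty [simp]: "few_above {#} t"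
  by (simp add: few_above_def)

lemma few_above_add_mset_0_iff: "few_above (add_mset c N) 0 \<longleftrightarrow> c = 0 \<and> N = {#}"
proof
  assume "few_above (add_mset c N) 0"
  from this[unfolded few_above_def, rule_format, of 0] this[unfolded few_above_def, rule_format, of 1]
  show "c = 0 \<and> N = {#}"
    by (auto split: if_splits)
qed (auto simp: few_above_def)

lemma few_above_add_mset_Suc_iff:
  assumes "\<forall>x\<in>#N. x \<le> c"
  shows "few_above (add_mset c N) (Suc s) \<longleftrightarrow> c \<le> Suc s \<and> few_above N s"
proof
  let ?n = "\<lambda>j. size (filter_mset (\<lambda>x. s < x + j) N)"
  have shift: "filter_mset (\<lambda>x. Suc s < x + Suc j) N = filter_mset (\<lambda>x. s < x + j) N" for j
    by simp
  assume H: "few_above (add_mset c N) (Suc s)"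
  note H' = H[unfolded few_above_def, rule_format]
  have "?n j \<le> j" for j
  proof (cases "?n j = 0")
    case False
    then obtain x where "x \<in># filter_mset (\<lambda>x. s < x + j) N"
      by (metis multiset_nonemptyE size_empty)
    then have "s < c + j"
      using assms by fastforce
    then show ?thesis
      using H'[of "Suc j"] by (simp add: shift)
  qed linarith
  moreover have "c \<le> Suc s"
    using H'[of 0] by (auto split: if_splits)
  ultimately show "c \<le> Suc s \<and> few_above N s"
    by (simp add: few_above_def)
next
  assume H: "c \<le> Suc s \<and> few_above N s"
  have none: "filter_mset (\<lambda>x. Suc s < x) N = {#}"
    using H assms by (force simp: filter_mset_eq_conv)
  have succ: "size (filter_mset (\<lambda>x. Suc s < x + Suc j) (add_mset c N)) \<le> Suc j" for j
    using H by (simp add: few_above_def le_SucI)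
  show "few_above (add_mset c N) (Suc s)"
    unfolding few_above_def
  proof (intro allI)
    fix j
    show "size (filter_mset (\<lambda>x. Suc s < x + j) (add_mset c N)) \<le> j"
      by (cases j) (use H none succ in simp_all)
  qed
qed

lemma fcomb_le_iff_few_above: "fcomb M \<le> t \<longleftrightarrow> few_above M t"
proof (induction M arbitrary: t rule: multiset_induct_max)
  case (add c N)
  then show ?case
    using fcomb_le_0_iff[OF add.hyps] few_above_add_mset_0_iff[of c N]
    by (cases t) (simp_all add: fcomb_add_mset_le_Suc_iff few_above_add_mset_Suc_iff)
qed simp

lemma fcomb_singleton [simp]: "fcomb {#c#} = c"
  using fcomb_add_mset_max[of "{#}" c] by simp

lemma fcomb_mono:
  assumes "M \<subseteq># N"
  shows "fcomb M \<le> fcomb N"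
  unfolding fcomb_le_iff_few_above few_above_def
proof
  fix j
  have "size (filter_mset (\<lambda>x. fcomb N < x + j) M) \<le> size (filter_mset (\<lambda>x. fcomb N < x + j) N)"
    using assms by (intro size_mset_mono multiset_filter_mono)
  also have "\<dots> \<le> j"
    using fcomb_le_iff_few_above[of N "fcomb N"] by (simp add: few_above_def)
  finally show "size (filter_mset (\<lambda>x. fcomb N < x + j) M) \<le> j" .
qed

lemma le_fcomb: "x \<in># M \<Longrightarrow> x \<le> fcomb M"
  using fcomb_mono[of "{#x#}" M] by simp

lemma fcomb_add_mset_le: "fcomb (add_mset c M) \<le> max (Suc (fcomb M)) c"
  unfolding fcomb_le_iff_few_above few_above_def
proof
  fix j
  let ?t = "max (Suc (fcomb M)) c"
  show "size (filter_mset (\<lambda>x. ?t < x + j) (add_mset c M)) \<le> j"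
  proof (cases j)
    case 0
    have "\<not> ?t < x" if "x \<in># M" for x
      using le_fcomb[OF that] by simp
    then show ?thesis
      using 0 by (auto simp: filter_mset_eq_conv)
  next
    case (Suc j')
    have "filter_mset (\<lambda>x. ?t < x + j) M \<subseteq># filter_mset (\<lambda>x. fcomb M < x + j') M"
      using Suc by (intro filter_mset_mono_strong) auto
    then have "size (filter_mset (\<lambda>x. ?t < x + j) M) \<le> j'"
      using fcomb_le_iff_few_above[of M "fcomb M"] size_mset_mono le_trans
      unfolding few_above_def by blast
    then show ?thesis
      using Suc by simp
  qed
qed

lemma Suc_le_fcomb_if_two_ge:
  assumes "{#a, b#} \<subseteq># M" "t \<le> a" "t \<le> b"
  shows "Suc t \<le> fcomb M"
proof (rule ccontr)
  assume "\<not> Suc t \<le> fcomb M"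
  then have "size (filter_mset (\<lambda>x. t < x + 1) M) \<le> 1"
    using fcomb_le_iff_few_above[of M t] unfolding few_above_def by (simp del: One_nat_def)
  moreover have "{#a, b#} \<subseteq># filter_mset (\<lambda>x. t < x + 1) M"
    using multiset_filter_mono[OF assms(1), of "\<lambda>x. t < x + 1"] assms(2,3) by simp
  ultimately show False
    using size_mset_mono by fastforce
qed

lemma fcomb_less_add_mset_max:
  assumes "\<forall>x\<in>#R. x \<le> d" "0 < fcomb (add_mset d R)"
  shows "fcomb R < fcomb (add_mset d R)"
  using assms fcomb_add_mset_max[OF assms(1)] by (cases "R = {#}") auto

lemma fcomb_drop_max_less:
  assumes "\<forall>x\<in>#R. x \<le> d" "fcomb (add_mset d (add_mset u R)) \<le> m" "u < m"
  shows "fcomb (add_mset u R) < m"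
proof (cases "u \<le> d")
  case True
  then have "fcomb (add_mset d (add_mset u R)) = max d (Suc (fcomb (add_mset u R)))"
    using assms(1) fcomb_add_mset_max[of "add_mset u R" d] by simp
  then show ?thesis
    using assms(2) by simp
next
  case False
  then have "\<forall>x\<in>#add_mset d R. x \<le> u" "\<forall>x\<in>#R. x \<le> u"
    using assms(1) by auto
  then have "Suc (fcomb (add_mset d R)) \<le> m"
    using assms(2) fcomb_add_mset_max[of "add_mset d R" u] by (simp add: add_mset_commute)
  show ?thesis
  proof (cases "R = {#}")
    case False
    then have "Suc (fcomb R) \<le> fcomb (add_mset d R)"
      using fcomb_add_mset_max[OF assms(1)] by simp
    then show ?thesis
      using \<open>Suc (fcomb (add_mset d R)) \<le> m\<close> assms(3) fcomb_add_mset_max[of R u]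
        \<open>\<forall>x\<in>#R. x \<le> u\<close> False by simp
  qed (use assms(3) in simp)
qed

lemma comp_of_subset: "comp_of E S u \<subseteq> insert u S"
  by (auto simp: comp_of_def elim: rtranclp.cases)

lemma can_fillI:
  "u \<in> H - F \<Longrightarrow> w \<in> F \<Longrightarrow> E w u \<Longrightarrow> (\<And>t. t \<in> H - F \<Longrightarrow> E w t \<Longrightarrow> t = u) \<Longrightarrow> can_fill E H F u"
  unfolding can_fill_def by blast

lemma zq_win_1_two_components:
  fixes V F :: "'a set" and E :: "'a \<Rightarrow> 'a \<Rightarrow> bool" and u1 u2 :: 'a
  defines "U1 \<equiv> comp_of E (V - F) u1" and "U2 \<equiv> comp_of E (V - F) u2"
  assumes "x1 \<in> F" "x2 \<in> F" "u1 \<in> V - F" "u2 \<in> V - F" "E x1 u1" "E x2 u2" "U1 \<noteq> U2"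
    and only1: "\<forall>t\<in>U1 \<union> U2. E x1 t \<longrightarrow> t = u1"
    and only2: "\<forall>t\<in>U2. E x2 t \<longrightarrow> t = u2"
    and "zq_win V E 1 k (insert u1 F)" "zq_win V E 1 k (insert u2 F)"
  shows "zq_win V E 1 k F"
proof (rule zq_win.adversary)
  show "{U1, U2} \<subseteq> components E (V - F)"
    using assms(5,6) by (auto simp: U1_def U2_def components_def)
  show "1 + 1 \<le> card {U1, U2}"
    using \<open>U1 \<noteq> U2\<close> by simp
  have in_comp: "u1 \<in> U1" "u2 \<in> U2"
    by (simp_all add: U1_def U2_def comp_of_def)
  have fresh: "U1 \<inter> F = {}" "U2 \<inter> F = {}"
    using assms(5,6) comp_of_subset[of E "V - F"] by (auto simp: U1_def U2_def)
  show "\<forall>R. R \<subseteq> {U1, U2} \<and> R \<noteq> {} \<longrightarrow>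
      (\<exists>u. can_fill E (F \<union> \<Union>R) F u \<and> zq_win V E 1 k (insert u F))"
  proof (intro allI impI)
    fix R
    assume R: "R \<subseteq> {U1, U2} \<and> R \<noteq> {}"
    show "\<exists>u. can_fill E (F \<union> \<Union>R) F u \<and> zq_win V E 1 k (insert u F)"
    proof (cases "U1 \<in> R")
      case True
      have "can_fill E (F \<union> \<Union>R) F u1"
        by (rule can_fillI[of _ _ _ x1]) (use True R in_comp fresh only1 assms(3,7) in blast)+
      then show ?thesis
        using assms(12) by blast
    next
      case False
      then have "R = {U2}"
        using R by blast
      then have "can_fill E (F \<union> \<Union>R) F u2"
        by (intro can_fillI[of _ _ _ x2]) (use in_comp fresh only2 assms(4,8) in blast)+
      then show ?thesis
        using assms(13) by blast
    qed
  qed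
qed

section \<open>Branches of a tree\<close>

locale tree =
  fixes V :: "'a set" and E :: "'a \<Rightarrow> 'a \<Rightarrow> bool"
  assumes tree: "is_tree V E"
begin

lemma finite_V: "finite V"
  using tree by (simp add: is_tree_def)

lemma edge_in_V: "E x y \<Longrightarrow> x \<in> V \<and> y \<in> V"
  using tree by (simp add: is_tree_def)

lemma edge_sym: "E x y \<Longrightarrow> E y x"
  using tree by (simp add: is_tree_def)

lemma edge_irrefl: "\<not> E x x"
  using tree by (simp add: is_tree_def)

lemma no_cycle: "\<not> is_cycle E cs"
  using tree by (simp add: is_tree_def)

lemma finite_neighbours: "finite {u. E x u \<and> P u}"
  using finite_V by (rule rev_finite_subset) (auto dest: edge_in_V)

abbreviation edge_within :: "'a set \<Rightarrow> 'a \<Rightarrow> 'a \<Rightarrow> bool" where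
  "edge_within S a b \<equiv> a \<in> S \<and> b \<in> S \<and> E a b"

text \<open>\<open>comp_of E S u = {z. reach S u z}\<close>; note that \<open>reach S u u\<close> holds even if \<open>u \<notin> S\<close>.\<close>

abbreviation reach :: "'a set \<Rightarrow> 'a \<Rightarrow> 'a \<Rightarrow> bool" where
  "reach S \<equiv> (edge_within S)\<^sup>*\<^sup>*"

lemma reach_sym: "reach S a b \<Longrightarrow> reach S b a"
  using symp_rtranclp[of "edge_within S"] by (auto simp: symp_def dest: edge_sym)

lemma reach_mono: "reach S a b \<Longrightarrow> S \<subseteq> S' \<Longrightarrow> reach S' a b"
  by (erule rtranclp_mono[THEN predicate2D, rotated]) auto

lemma reach_in: "reach S a b \<Longrightarrow> a \<in> S \<Longrightarrow> b \<in> S"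
  by (induction rule: rtranclp_induct) auto

lemma reach_V: "x \<in> V \<Longrightarrow> y \<in> V \<Longrightarrow> reach V x y"
proof -
  assume "x \<in> V" "y \<in> V"
  then have "E\<^sup>*\<^sup>* x y"
    using tree by (simp add: is_tree_def)
  then show "reach V x y"
    by (induction rule: rtranclp_induct) (auto dest: edge_in_V intro: rtranclp.rtrancl_into_rtrancl)
qed

lemma first_exit:
  assumes "reach S a x" "a \<in> F"
  shows "x \<in> F \<or> (\<exists>f\<in>F. \<exists>u\<in>S - F. E f u \<and> reach (S - F) u x)"
  using assms(1)
proof (induction rule: rtranclp_induct)
  case (step y z)
  show ?case
  proof (cases "z \<in> F \<or> y \<in> F")
    case False
    with step.IH obtain f u where fu: "f \<in> F" "u \<in> S - F" "E f u" "reach (S - F) u y"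
      by blast
    have "edge_within (S - F) y z"
      using False step.hyps(2) by blast
    with fu(4) have "reach (S - F) u z"
      by (rule rtranclp.rtrancl_into_rtrancl)
    with fu(1-3) show ?thesis
      by blast
  next
    case True
    then show ?thesis
      using step.hyps(2) by blast
  qed
qed (use assms(2) in simp)

definition connected :: "'a set \<Rightarrow> bool" where
  "connected S \<longleftrightarrow> (\<forall>a\<in>S. \<forall>b\<in>S. reach S a b)"

lemma connected_insert:
  assumes "connected F" "w \<in> F" "E w u"
  shows "connected (insert u F)"
proof -
  have to_w: "reach (insert u F) a w" if "a \<in> insert u F" for a
  proof (cases "a = u")
    case True
    then show ?thesis
      using assms(2,3) edge_sym by (auto intro: r_into_rtranclp)
  next
    case False
    then show ?thesis
      using that assms(1,2) reach_mono[of F a w "insert u F"] unfolding connected_def by blast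
  qed
  show ?thesis
    unfolding connected_def using to_w reach_sym by (meson rtranclp_trans)
qed

definition branch :: "'a \<Rightarrow> 'a \<Rightarrow> 'a set" where
  "branch x u = comp_of E (V - {x}) u"

definition children :: "'a \<Rightarrow> 'a \<Rightarrow> 'a set" where
  "children p w = {c. E w c \<and> c \<noteq> p}"

lemma finite_children: "finite (children p w)"
  unfolding children_def by (rule finite_neighbours)

lemma mem_branch_iff: "z \<in> branch x u \<longleftrightarrow> reach (V - {x}) u z"
  by (simp add: branch_def comp_of_def)

lemma root_in_branch: "u \<in> branch x u"
  by (simp add: mem_branch_iff)

lemma branch_subset:
  assumes "E x u"
  shows "branch x u \<subseteq> V - {x}"
proof
  fix z
  assume "z \<in> branch x u"
  moreover have "u \<in> V - {x}"
    using assms edge_in_V edge_irrefl by blast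
  ultimately show "z \<in> V - {x}"
    unfolding mem_branch_iff by (blast dest: reach_in)
qed

lemma finite_branch: "finite (branch x u)"
  unfolding branch_def by (rule finite_subset[OF comp_of_subset]) (simp add: finite_V)

lemma branch_trans: "t \<in> branch x u \<Longrightarrow> reach (V - {x}) t s \<Longrightarrow> s \<in> branch x u"
  unfolding mem_branch_iff by simp

lemma branch_step: "E x u \<Longrightarrow> z \<in> branch x u \<Longrightarrow> E z z' \<Longrightarrow> z' \<noteq> x \<Longrightarrow> z' \<in> branch x u"
  using branch_subset edge_in_V branch_trans[of z x u z'] by blast

lemma comp_of_subset_branch:
  assumes "x \<notin> S"
  shows "comp_of E S u \<subseteq> branch x u"
proof
  fix z
  assume "z \<in> comp_of E S u"
  then have "reach S u z"
    by (simp add: comp_of_def)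
  then show "z \<in> branch x u"
  proof (induction rule: rtranclp_induct)
    case (step y z)
    then have "edge_within (V - {x}) y z"
      using assms edge_in_V by blast
    with step.IH show ?case
      by (rule branch_trans[OF _ r_into_rtranclp])
  qed (rule root_in_branch)
qed

lemma branches_separated:
  assumes "E x u" "E x u'" "u \<noteq> u'"
  shows "\<not> reach (V - {x}) u u'"
proof
  assume "reach (V - {x}) u u'"
  then obtain ps0 where "rtrancl_path (edge_within (V - {x})) u ps0 u'"
    by (auto simp: rtranclp_eq_rtrancl_path)
  then obtain ps where ps: "rtrancl_path (edge_within (V - {x})) u ps u'" "distinct (u # ps)"
    by (rule rtrancl_path_distinct)
  have "ps \<noteq> []"
    using ps(1) assms(3) by (auto elim: rtrancl_path.cases)
  have "x \<notin> set ps"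
    using rtrancl_path_Range[OF ps(1)] by blast
  define cs where "cs = x # u # ps"
  have "is_cycle E cs"
    unfolding is_cycle_def
  proof (intro conjI allI impI)
    show "distinct cs" "3 \<le> length cs"
      using ps(2) \<open>ps \<noteq> []\<close> \<open>x \<notin> set ps\<close> assms(1) edge_irrefl
      by (auto simp: cs_def Suc_le_eq)
    fix i
    assume i: "i < length cs"
    consider "i = 0" | j where "i = Suc j" "j < length ps" | "i = Suc (length ps)"
      using i by (cases i) (auto simp: cs_def less_Suc_eq)
    then show "E (cs ! i) (cs ! ((i + 1) mod length cs))"
    proof cases
      case 1
      then show ?thesis
        using assms(1) by (simp add: cs_def)
    next
      case 2
      then show ?thesis
        using rtrancl_path_nth[OF ps(1), of j] by (simp add: cs_def)
    next
      case 3
      then have "cs ! i = u'"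
        using rtrancl_path_last[OF ps(1) \<open>ps \<noteq> []\<close>] \<open>ps \<noteq> []\<close> by (simp add: cs_def last_conv_nth)
      then show ?thesis
        using 3 assms(2) edge_sym by (simp add: cs_def)
    qed
  qed
  with no_cycle show False
    by blast
qed

lemma branches_disjoint:
  assumes "E x u" "E x u'" "u \<noteq> u'"
  shows "branch x u \<inter> branch x u' = {}"
proof (intro equals0I)
  fix z
  assume "z \<in> branch x u \<inter> branch x u'"
  then have "reach (V - {x}) u z" "reach (V - {x}) u' z"
    unfolding Int_iff mem_branch_iff by blast+
  then have "reach (V - {x}) u u'"
    by (rule rtranclp_trans[OF _ reach_sym])
  then show False
    using branches_separated[OF assms] by blast
qed

lemma neighbour_in_branch: "E x u \<Longrightarrow> E x z \<Longrightarrow> z \<in> branch x u \<Longrightarrow> z = u"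
  using branches_disjoint root_in_branch by blast

lemma connected_enters_branch:
  assumes "connected S" "a \<in> S" "t \<in> S" "E a b" "t \<in> branch a b"
  shows "b \<in> S"
proof -
  have "reach S a t"
    using assms(1-3) by (simp add: connected_def)
  then have "t = a \<or> (\<exists>b'\<in>S. E a b' \<and> t \<in> branch a b')"
  proof (induction rule: rtranclp_induct)
    case (step y z)
    then show ?case
      using root_in_branch branch_step by metis
  qed simp
  moreover have "t \<noteq> a"
    using branch_subset[OF assms(4)] assms(5) by blast
  ultimately show ?thesis
    using branches_disjoint[OF assms(4)] assms(5) by blast
qed

lemma branch_child_subset:
  assumes "E p w" "c \<in> children p w"
  shows "branch w c \<subseteq> branch p w"
proof
  have wc: "E w c" "c \<noteq> p" and "E w p"
    using assms edge_sym by (auto simp: children_def)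
  fix z
  assume "z \<in> branch w c"
  then have "reach (V - {w}) c z"
    by (simp add: mem_branch_iff)
  then show "z \<in> branch p w"
  proof (induction rule: rtranclp_induct)
    case base
    show ?case
      using branch_step[OF assms(1) root_in_branch wc(1)] wc(2) by blast
  next
    case (step y z')
    have "reach (V - {w}) c z'"
      using step.hyps by (rule rtranclp.rtrancl_into_rtrancl)
    then have "z' \<noteq> p"
      using branches_separated[OF wc(1) \<open>E w p\<close> wc(2)] by blast
    then show ?case
      using branch_step[OF assms(1) step.IH] step.hyps(2) by blast
  qed
qed

lemma branch_decomp:
  assumes "E p w"
  shows "branch p w = insert w (\<Union>c\<in>children p w. branch w c)"
proof (intro equalityI subsetI)
  fix z
  assume "z \<in> branch p w"
  then have "reach (V - {p}) w z"
    by (simp add: mem_branch_iff)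
  then show "z \<in> insert w (\<Union>c\<in>children p w. branch w c)"
  proof (induction rule: rtranclp_induct)
    case (step y z')
    show ?case
    proof (cases "y = w")
      case True
      then show ?thesis
        using step.hyps(2) root_in_branch by (auto simp: children_def)
    next
      case False
      then obtain c where "c \<in> children p w" "y \<in> branch w c"
        using step.IH by blast
      moreover have "E w c"
        using \<open>c \<in> children p w\<close> by (simp add: children_def)
      ultimately show ?thesis
        using branch_step[of w c y z'] step.hyps(2) by blast
    qed
  qed simp
qed (use assms branch_child_subset root_in_branch in blast)+

lemma card_branch_child_less:
  assumes "E p w" "c \<in> children p w"
  shows "card (branch w c) < card (branch p w)"
proof (rule psubset_card_mono[OF finite_branch])
  have "w \<notin> branch w c"
    using branch_subset assms(2) by (auto simp: children_def)
  then show "branch w c \<subset> branch p w"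
    using branch_child_subset[OF assms] root_in_branch by blast
qed

lemma in_some_branch:
  assumes "x \<in> V" "y \<in> V" "y \<noteq> x"
  shows "\<exists>u. E x u \<and> y \<in> branch x u"
  using first_exit[OF reach_V[OF assms(1,2)], of "{x}"] assms(3) by (auto simp: mem_branch_iff)

section \<open>Branch values and the extremes of \<open>f\<close>\<close>

text \<open>\<open>branch_val x u\<close> is \<open>f\<^sub>T\<^sub>'\<^sub>,\<^sub>u(u)\<close> for the subtree \<open>T'\<close> on \<open>branch x u\<close>; the fuel \<open>card V\<close>
  exceeds its depth.\<close>

definition branch_val :: "'a \<Rightarrow> 'a \<Rightarrow> nat" where
  "branch_val x u = ftree E (card V) (Some x) u"

abbreviation vals :: "'a \<Rightarrow> 'a set \<Rightarrow> nat multiset" where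
  "vals x A \<equiv> image_mset (branch_val x) (mset_set A)"

lemma vals_mono: "finite B \<Longrightarrow> A \<subseteq> B \<Longrightarrow> vals x A \<subseteq># vals x B"
  by (meson finite_subset image_mset_subseteq_mono msubset_mset_set_iff)

lemma vals_remove: "finite A \<Longrightarrow> a \<in> A \<Longrightarrow> vals x A = add_mset (branch_val x a) (vals x (A - {a}))"
  by (simp add: mset_set.remove)

lemma fcomb_vals_gt_if_two:
  assumes "finite A" "a \<in> A" "b \<in> A" "a \<noteq> b" "t \<le> branch_val x a" "t \<le> branch_val x b"
  shows "t < fcomb (vals x A)"
proof -
  have "vals x A = add_mset (branch_val x a) (add_mset (branch_val x b) (vals x (A - {a} - {b})))"
    using vals_remove[OF assms(1,2)] vals_remove[of "A - {a}" b x] assms(1,3,4) by simp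
  then have "{#branch_val x a, branch_val x b#} \<subseteq># vals x A"
    by simp
  from Suc_le_fcomb_if_two_ge[OF this assms(5,6)] show ?thesis
    by simp
qed

lemma card_branch_less:
  assumes "E x u"
  shows "card (branch x u) < card V"
proof (rule psubset_card_mono[OF finite_V])
  show "branch x u \<subset> V"
    using branch_subset[OF assms] edge_in_V[OF assms] by blast
qed

lemma ftree_fuel:
  "E x u \<Longrightarrow> card (branch x u) \<le> n \<Longrightarrow> n \<le> n' \<Longrightarrow> ftree E n (Some x) u = ftree E n' (Some x) u"
proof (induction n arbitrary: x u n')
  case 0
  then show ?case
    using finite_branch root_in_branch by (metis card_0_eq empty_iff le_0_eq)
next
  case (Suc n)
  then obtain n'' where n': "n' = Suc n''"
    by (cases n') auto
  have "ftree E n (Some u) c = ftree E n'' (Some u) c" if "c \<in> children x u" for c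
    using Suc card_branch_child_less[OF Suc.prems(1) that] that n' by (simp add: children_def)
  then have "image_mset (ftree E n (Some u)) (mset_set (children x u))
      = image_mset (ftree E n'' (Some u)) (mset_set (children x u))"
    using finite_children by (intro image_mset_cong) simp
  moreover have "{w. E u w \<and> Some w \<noteq> Some x} = children x u"
    by (auto simp: children_def)
  ultimately show ?case
    using n' by simp
qed

lemma ftree_eq_branch_val: "E w c \<Longrightarrow> card V = Suc n \<Longrightarrow> ftree E n (Some w) c = branch_val w c"
  using ftree_fuel[of w c n "Suc n"] card_branch_less unfolding branch_val_def by fastforce

lemma branch_val_rec: "E x u \<Longrightarrow> branch_val x u = fcomb (vals u (children x u))"
proof -
  assume e: "E x u"
  then obtain n where n: "card V = Suc n"
    using card_branch_less by (cases "card V") auto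
  have "{w. E u w \<and> Some w \<noteq> Some x} = children x u"
    by (auto simp: children_def)
  moreover have "image_mset (ftree E n (Some u)) (mset_set (children x u)) = vals u (children x u)"
    using ftree_eq_branch_val n finite_children by (intro image_mset_cong) (simp add: children_def)
  ultimately show ?thesis
    unfolding branch_val_def n by simp
qed

lemma froot_eq: "v \<in> V \<Longrightarrow> froot V E v = fcomb (vals v {u. E v u})"
proof -
  assume "v \<in> V"
  then obtain n where n: "card V = Suc n"
    using finite_V by (cases "card V") auto
  have "image_mset (ftree E n (Some v)) (mset_set {u. E v u}) = vals v {u. E v u}"
    using ftree_eq_branch_val n finite_neighbours[of v "\<lambda>_. True"] by (intro image_mset_cong) simp
  then show ?thesis
    unfolding froot_def n by simp
qed

lemma froot_split: "E p w \<Longrightarrow> froot V E w = fcomb (add_mset (branch_val w p) (vals w (children p w)))"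
proof -
  assume e: "E p w"
  have "{u. E w u} - {p} = children p w"
    by (auto simp: children_def)
  then show ?thesis
    using froot_eq[of w] vals_remove[OF finite_neighbours[of w "\<lambda>_. True"], of p w] e
      edge_in_V edge_sym by simp
qed

lemma vals_children_swap:
  assumes "E p w" "c \<in> children p w"
  shows "vals w (children c w) = add_mset (branch_val w p) (vals w (children p w - {c}))"
proof -
  have "p \<in> children c w" "children c w - {p} = children p w - {c}"
    using assms edge_sym by (auto simp: children_def)
  then show ?thesis
    using vals_remove[OF finite_children] by metis
qed

lemma branch_val_le_froot: "E x u \<Longrightarrow> branch_val x u \<le> froot V E x"
  using froot_eq[of x] edge_in_V le_fcomb finite_neighbours[of x "\<lambda>_. True"] by fastforce

lemma branch_val_rev_le_froot: "E x u \<Longrightarrow> branch_val u x \<le> froot V E x"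
  using branch_val_rec[OF edge_sym] froot_eq[of x] edge_in_V fcomb_mono
    vals_mono[OF finite_neighbours[of x "\<lambda>_. True"], of "children u x"]
  by (fastforce simp: children_def)

lemma branch_val_child_le: "E p w \<Longrightarrow> c \<in> children p w \<Longrightarrow> branch_val w c \<le> branch_val p w"
  using branch_val_rec le_fcomb finite_children by fastforce

lemma froot_in_branch_le:
  "E p w \<Longrightarrow> branch_val p w \<le> t \<Longrightarrow> branch_val w p \<le> Suc t \<Longrightarrow> y \<in> branch p w
    \<Longrightarrow> froot V E y \<le> Suc t"
proof (induction "card (branch p w)" arbitrary: p w rule: less_induct)
  case less
  note e = less.prems(1)
  consider "y = w" | c where "c \<in> children p w" "y \<in> branch w c"
    using branch_decomp[OF e] less.prems(4) by blast
  then show ?case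
  proof cases
    case 1
    have "froot V E w \<le> max (Suc (branch_val p w)) (branch_val w p)"
      using froot_split[OF e] fcomb_add_mset_le branch_val_rec[OF e] by metis
    then show ?thesis
      using 1 less.prems(2,3) by simp
  next
    case 2
    have ewc: "E w c"
      using 2(1) by (simp add: children_def)
    have "fcomb (vals w (children p w - {c})) \<le> branch_val p w"
      using branch_val_rec[OF e] by (simp add: fcomb_mono vals_mono finite_children)
    moreover have "branch_val c w \<le> max (Suc (fcomb (vals w (children p w - {c})))) (branch_val w p)"
      using branch_val_rec[OF edge_sym[OF ewc]] vals_children_swap[OF e 2(1)] fcomb_add_mset_le
      by metis
    ultimately have "branch_val c w \<le> Suc t"
      using less.prems(2,3) by simp
    moreover have "branch_val w c \<le> t"
      using branch_val_child_le[OF e 2(1)] less.prems(2) by simp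
    ultimately show ?thesis
      using less.hyps[OF card_branch_child_less[OF e 2(1)] ewc] 2(2) by blast
  qed
qed

lemma froot_le_Suc: "x \<in> V \<Longrightarrow> y \<in> V \<Longrightarrow> froot V E y \<le> Suc (froot V E x)"
proof (cases "y = x")
  case False
  assume "x \<in> V" "y \<in> V"
  then obtain u where "E x u" "y \<in> branch x u"
    using in_some_branch False by blast
  then show ?thesis
    using froot_in_branch_le branch_val_le_froot branch_val_rev_le_froot le_SucI by blast
qed simp

lemma exists_froot_gt:
  assumes min: "\<forall>v\<in>V. m \<le> froot V E v"
  shows "E p w \<Longrightarrow> branch_val w p < m \<Longrightarrow> \<exists>y\<in>V. m < froot V E y"
proof (induction "card (branch p w)" arbitrary: p w rule: less_induct)
  case less
  note e = less.prems(1)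
  show ?case
  proof (rule ccontr)
    assume none: "\<not> (\<exists>y\<in>V. m < froot V E y)"
    then have fw: "froot V E w \<le> m"
      using e edge_in_V by force
    have "children p w \<noteq> {}"
    proof
      assume "children p w = {}"
      then have "froot V E w < m"
        using froot_split[OF e] less.prems(2) by simp
      then show False
        using min e edge_in_V by force
    qed
    then obtain c where c: "c \<in> children p w" "\<And>c'. c' \<in> children p w \<Longrightarrow> branch_val w c' \<le> branch_val w c"
      using finite_children finite_ex_max_on by metis
    define R where "R = vals w (children p w - {c})"
    have R_le: "\<forall>x\<in>#R. x \<le> branch_val w c"
      using c(2) finite_children by (auto simp: R_def)
    have "froot V E w = fcomb (add_mset (branch_val w c) (add_mset (branch_val w p) R))"
      using froot_split[OF e] vals_remove[OF finite_children c(1)] by (simp add: R_def add_mset_commute)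
    then have "fcomb (add_mset (branch_val w p) R) < m"
      using fcomb_drop_max_less[OF R_le] fw less.prems(2) by simp
    moreover have "branch_val c w = fcomb (add_mset (branch_val w p) R)"
      using branch_val_rec[OF edge_sym] vals_children_swap[OF e c(1)] c(1)
      by (simp add: R_def children_def)
    moreover have "E w c"
      using c(1) by (simp add: children_def)
    ultimately show False
      using less.hyps[OF card_branch_child_less[OF e c(1)]] none by auto
  qed
qed

lemma exists_froot_gt_of_pos:
  assumes min: "\<forall>v\<in>V. froot V E x \<le> froot V E v" and x: "x \<in> V" "0 < froot V E x"
  shows "\<exists>y\<in>V. froot V E x < froot V E y"
proof -
  have "{u. E x u} \<noteq> {}"
  proof
    assume "{u. E x u} = {}"
    then show False
      using froot_eq[OF x(1)] x(2) by simp
  qed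
  then obtain u where u: "E x u" "\<And>u'. E x u' \<Longrightarrow> branch_val x u' \<le> branch_val x u"
    using finite_ex_max_on[OF finite_neighbours[of x "\<lambda>_. True"], of "branch_val x"] by auto
  define R where "R = vals x ({u'. E x u'} - {u})"
  have "froot V E x = fcomb (add_mset (branch_val x u) R)"
    using froot_eq[OF x(1)] vals_remove[of "{u. E x u}" u x] finite_neighbours[of x "\<lambda>_. True"] u(1)
    by (simp add: R_def)
  moreover have "branch_val u x = fcomb R"
    using branch_val_rec[OF edge_sym[OF u(1)]] by (simp add: R_def children_def set_diff_eq)
  moreover have "\<forall>y\<in>#R. y \<le> branch_val x u"
    using u(2) finite_neighbours[of x "\<lambda>_. True"] by (auto simp: R_def)
  ultimately have "branch_val u x < froot V E x"
    using fcomb_less_add_mset_max x(2) by simp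
  then show ?thesis
    using exists_froot_gt[OF min u(1)] by blast
qed

lemma exists_froot_pos:
  assumes "card V \<ge> 3"
  shows "\<exists>v\<in>V. 0 < froot V E v"
proof -
  obtain x a where xa: "x \<in> V" "E x a"
    using assms finite_V in_some_branch
    by (metis card_le_Suc_iff numeral_3_eq_3 insert_iff)
  obtain z where z: "z \<in> V" "z \<noteq> x" "z \<noteq> a"
    using assms by (metis card_le_Suc_iff numeral_3_eq_3 insert_iff)
  obtain v u where "v \<in> {x, a}" "u \<in> V - {x, a}" "E v u"
    using first_exit[OF reach_V[OF xa(1) z(1)], of "{x, a}"] z by blast
  then obtain b where "E v a \<or> E v x" "E v b" "b \<noteq> a" "b \<noteq> x"
    using xa(2) edge_sym by blast
  then obtain a' where "E v a'" "E v b" "a' \<noteq> b"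
    by blast
  then have "0 < fcomb (vals v {u. E v u})"
    using fcomb_vals_gt_if_two[OF finite_neighbours[of v "\<lambda>_. True"], of a' b 0] by simp
  then show ?thesis
    using froot_eq \<open>E v b\<close> edge_in_V by fastforce
qed

lemma Max_froot_eq_Suc_Min:
  assumes "card V \<ge> 3"
  shows "Suc (Min (froot V E ` V)) = Max (froot V E ` V)"
proof -
  have V: "finite V" "V \<noteq> {}"
    using assms finite_V by auto
  have "Min (froot V E ` V) \<in> froot V E ` V"
    using V by simp
  then obtain x where x: "x \<in> V" "froot V E x = Min (froot V E ` V)"
    by (metis imageE)
  have min: "\<forall>v\<in>V. froot V E x \<le> froot V E v"
    using x V by simp
  have "\<exists>y\<in>V. froot V E x < froot V E y"
  proof (cases "froot V E x = 0")
    case True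
    then show ?thesis
      using exists_froot_pos[OF assms] by simp
  qed (use exists_froot_gt_of_pos[OF min x(1)] in simp)
  then obtain y where "y \<in> V" "froot V E x < froot V E y"
    by blast
  moreover have "froot V E y \<le> Max (froot V E ` V)" "Max (froot V E ` V) \<le> Suc (froot V E x)"
    using \<open>y \<in> V\<close> V froot_le_Suc[OF x(1)] by simp_all
  ultimately show ?thesis
    using x(2) by simp
qed

section \<open>The strategy for the \<open>Z\<^sub>1\<close>-game\<close>

abbreviation unfilled_nbrs :: "'a set \<Rightarrow> 'a \<Rightarrow> 'a set" where
  "unfilled_nbrs F x \<equiv> {u. u \<in> V - F \<and> E x u}"

lemma finite_unfilled_nbrs: "finite (unfilled_nbrs F x)"
  using finite_neighbours[of x "\<lambda>u. u \<in> V - F"] by (simp add: conj_commute)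

definition demand :: "'a set \<Rightarrow> 'a \<Rightarrow> nat" where
  "demand F x = fcomb (vals x (unfilled_nbrs F x))"

lemma demand_antimono: "F \<subseteq> F' \<Longrightarrow> demand F' x \<le> demand F x"
  unfolding demand_def by (intro fcomb_mono vals_mono finite_unfilled_nbrs) auto

lemma demand_eq_children: "p \<in> F \<Longrightarrow> E p w \<Longrightarrow> demand F w = fcomb (vals w (children p w - F))"
proof -
  assume "p \<in> F" "E p w"
  then have "unfilled_nbrs F w = children p w - F"
    using edge_in_V by (auto simp: children_def)
  then show ?thesis
    by (simp add: demand_def)
qed

lemma demand_le_branch_val: "p \<in> F \<Longrightarrow> E p w \<Longrightarrow> demand F w \<le> branch_val p w"
  using demand_eq_children branch_val_rec
  by (metis Diff_subset fcomb_mono finite_children vals_mono)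

lemma branch_val_le_demand: "u \<in> V - F \<Longrightarrow> E x u \<Longrightarrow> branch_val x u \<le> demand F x"
  unfolding demand_def using finite_unfilled_nbrs by (intro le_fcomb) simp

lemma branch_disjoint_filled: "connected F \<Longrightarrow> x \<in> F \<Longrightarrow> u \<notin> F \<Longrightarrow> E x u \<Longrightarrow> branch x u \<inter> F = {}"
  using connected_enters_branch by blast

lemma fcomb_vals_remove_max_less:
  assumes "finite A" "c \<in> A" "\<And>c'. c' \<in> A \<Longrightarrow> branch_val x c' \<le> branch_val x c"
    and "0 < fcomb (vals x A)"
  shows "fcomb (vals x (A - {c})) < fcomb (vals x A)"
  using fcomb_less_add_mset_max[of "vals x (A - {c})" "branch_val x c"] assms
    vals_remove[OF assms(1,2)] by simp

definition balanced :: "'a set \<Rightarrow> nat \<Rightarrow> bool" where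
  "balanced F k \<longleftrightarrow> F \<subseteq> V \<and> F \<noteq> {} \<and> connected F \<and> (\<forall>x\<in>F. demand F x \<le> k)"

lemma balanced_insert:
  assumes "balanced F k" "x \<in> F" "u \<in> V - F" "E x u"
  shows "balanced (insert u F) k"
proof -
  have "demand (insert u F) u \<le> k"
    using demand_le_branch_val[of x "insert u F" u] branch_val_le_demand[OF assms(3,4)] assms(1,2,4)
    by (fastforce simp: balanced_def)
  moreover have "demand (insert u F) y \<le> k" if "y \<in> F" for y
    using demand_antimono[of F "insert u F" y] assms(1) that by (fastforce simp: balanced_def)
  ultimately show ?thesis
    using assms connected_insert by (auto simp: balanced_def)
qed

text \<open>\<open>z\<close> settles the branch at level \<open>m\<close> if filling it, together with whatever makes the filled set
  connected, brings every demand in the branch below \<open>m\<close>; \<open>z\<close> is needed only when the branch value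
  is exactly \<open>m\<close>.\<close>

definition settles :: "'a \<Rightarrow> 'a \<Rightarrow> nat \<Rightarrow> 'a \<Rightarrow> bool" where
  "settles p w m z \<longleftrightarrow> (\<forall>F x. connected F \<longrightarrow> p \<in> F \<longrightarrow> (branch_val p w = m \<longrightarrow> z \<in> F)
     \<longrightarrow> x \<in> F \<longrightarrow> x \<in> branch p w \<longrightarrow> demand F x < m)"

lemma settlesI:
  "(\<And>F x. connected F \<Longrightarrow> p \<in> F \<Longrightarrow> (branch_val p w = m \<Longrightarrow> z \<in> F) \<Longrightarrow> x \<in> F \<Longrightarrow> x \<in> branch p w
    \<Longrightarrow> demand F x < m) \<Longrightarrow> settles p w m z"
  unfolding settles_def by blast

lemma settlesD:
  "settles p w m z \<Longrightarrow> connected F \<Longrightarrow> p \<in> F \<Longrightarrow> (branch_val p w = m \<Longrightarrow> z \<in> F) \<Longrightarrow> x \<in> F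
    \<Longrightarrow> x \<in> branch p w \<Longrightarrow> demand F x < m"
  unfolding settles_def by blast

lemma demand_lt_if_heaviest_child_filled:
  assumes "E p w" "p \<in> F" "c \<in> children p w" "c \<in> F"
    and "\<And>c'. c' \<in> children p w \<Longrightarrow> branch_val w c' \<le> branch_val w c" "0 < branch_val p w"
  shows "demand F w < branch_val p w"
proof -
  have "demand F w \<le> fcomb (vals w (children p w - {c}))"
    unfolding demand_eq_children[OF assms(2,1)]
    using assms(4) by (intro fcomb_mono vals_mono) (auto simp: finite_children)
  also have "\<dots> < branch_val p w"
    using fcomb_vals_remove_max_less[OF finite_children assms(3,5)] assms(6) branch_val_rec[OF assms(1)]
    by simp
  finally show ?thesis .
qed

lemma settles_below:
  assumes e: "E p w" and "branch_val p w < m"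
    and IH: "\<And>c. c \<in> children p w \<Longrightarrow> \<exists>z. settles w c m z"
  shows "settles p w m w"
proof (rule settlesI)
  fix F x
  assume F: "connected F" "p \<in> F" "x \<in> F" "x \<in> branch p w"
  have "w \<in> F"
    using connected_enters_branch[OF F(1,2,3) e F(4)] .
  consider "x = w" | c where "c \<in> children p w" "x \<in> branch w c"
    using branch_decomp[OF e] F(4) by blast
  then show "demand F x < m"
  proof cases
    case 1
    then show ?thesis
      using demand_le_branch_val[OF F(2) e] assms(2) by simp
  next
    case 2
    moreover obtain z where "settles w c m z"
      using IH[OF 2(1)] by blast
    moreover have "branch_val w c < m"
      using branch_val_child_le[OF e 2(1)] assms(2) by simp
    ultimately show ?thesis
      using settlesD F(1,3) \<open>w \<in> F\<close> by fastforce
  qed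
qed

lemma settles_at:
  assumes e: "E p w" and m: "branch_val p w = m" "0 < m"
    and c: "c \<in> children p w" "\<And>c'. c' \<in> children p w \<Longrightarrow> branch_val w c' \<le> branch_val w c"
    and z: "z \<in> branch w c" "settles w c m z"
    and IH: "\<And>c. c \<in> children p w \<Longrightarrow> \<exists>z. settles w c m z"
  shows "settles p w m z"
proof (rule settlesI)
  fix F x
  assume F: "connected F" "p \<in> F" "branch_val p w = m \<Longrightarrow> z \<in> F" "x \<in> F" "x \<in> branch p w"
  have "w \<in> F" "z \<in> F"
    using connected_enters_branch[OF F(1,2,4) e F(5)] F(3) m(1) by blast+
  moreover have "E w c"
    using c(1) by (simp add: children_def)
  ultimately have "c \<in> F"
    using connected_enters_branch[OF F(1)] z(1) by blast
  consider "x = w" | c' where "c' \<in> children p w" "x \<in> branch w c'"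
    using branch_decomp[OF e] F(5) by blast
  then show "demand F x < m"
  proof cases
    case 1
    then show ?thesis
      using demand_lt_if_heaviest_child_filled[OF e F(2) c(1) \<open>c \<in> F\<close> c(2)] m by simp
  next
    case 2
    show ?thesis
    proof (cases "c' = c")
      case True
      then show ?thesis
        using settlesD[OF z(2) F(1) \<open>w \<in> F\<close> \<open>z \<in> F\<close> F(4)] 2(2) by simp
    next
      case False
      have "branch_val w c' < m"
      proof (rule ccontr)
        assume "\<not> branch_val w c' < m"
        then have "m < fcomb (vals w (children p w))"
          using fcomb_vals_gt_if_two[OF finite_children c(1) 2(1)] False c(2)[OF 2(1)] by auto
        then show False
          using branch_val_rec[OF e] m(1) by simp
      qed
      moreover obtain z' where "settles w c' m z'"
        using IH[OF 2(1)] by blast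
      ultimately show ?thesis
        using settlesD F(1,4) \<open>w \<in> F\<close> 2(2) by fastforce
    qed
  qed
qed

lemma settling_vertex_exists:
  "E p w \<Longrightarrow> 0 < m \<Longrightarrow> branch_val p w \<le> m \<Longrightarrow> \<exists>z\<in>branch p w. settles p w m z"
proof (induction "card (branch p w)" arbitrary: p w rule: less_induct)
  case less
  note e = less.prems(1)
  have IH: "\<exists>z\<in>branch w c. settles w c m z" if "c \<in> children p w" for c
    using less.hyps[OF card_branch_child_less[OF e that]] that less.prems(2,3)
      branch_val_child_le[OF e that] by (simp add: children_def)
  then have IH': "\<exists>z. settles w c m z" if "c \<in> children p w" for c
    using that by blast
  show ?case
  proof (cases "branch_val p w = m")
    case False
    then have "settles p w m w"
      using settles_below[OF e _ IH'] less.prems(3) by simp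
    then show ?thesis
      using root_in_branch by blast
  next
    case True
    then have "children p w \<noteq> {}"
      using less.prems(2) branch_val_rec[OF e] by auto
    then obtain c where c: "c \<in> children p w"
      "\<And>c'. c' \<in> children p w \<Longrightarrow> branch_val w c' \<le> branch_val w c"
      using finite_ex_max_on[OF finite_children] by metis
    then obtain z where "z \<in> branch w c" "settles w c m z"
      using IH by blast
    then show ?thesis
      using settles_at[OF e True less.prems(2) c _ _ IH'] branch_child_subset[OF e c(1)] by blast
  qed
qed

lemma card_unfilled_insert_less: "u \<in> V - F \<Longrightarrow> card (V - insert u F) < card (V - F)"
  by (metis Diff_insert card_Diff1_less finite_Diff finite_V)

definition two_clusters :: "'a \<Rightarrow> 'a \<Rightarrow> 'a set \<Rightarrow> bool" where
  "two_clusters y z F \<longleftrightarrow> (\<forall>x\<in>F. reach F x y \<or> reach F x z)"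

lemma two_clusters_insert:
  assumes "two_clusters y z F" "w \<in> F" "E w u"
  shows "two_clusters y z (insert u F)"
  unfolding two_clusters_def
proof
  fix x
  assume x: "x \<in> insert u F"
  have mono: "reach (insert u F) x' y \<or> reach (insert u F) x' z" if "x' \<in> F" for x'
    using assms(1) that reach_mono[of F x' _ "insert u F"] unfolding two_clusters_def by blast
  show "reach (insert u F) x y \<or> reach (insert u F) x z"
  proof (cases "x = u")
    case True
    then have step: "edge_within (insert u F) x w"
      using assms(2,3) edge_sym by blast
    from mono[OF assms(2)] show ?thesis
      using converse_rtranclp_into_rtranclp[of "edge_within (insert u F)", OF step] by blast
  qed (use x mono in blast)
qed

lemma two_clusters_connected:
  assumes "two_clusters y z F" "reach F y z"
  shows "connected F"
  unfolding connected_def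
proof (intro ballI)
  have to_y: "reach F x y" if "x \<in> F" for x
    using assms that reach_sym unfolding two_clusters_def by (meson rtranclp_trans)
  fix a b
  assume "a \<in> F" "b \<in> F"
  from to_y[OF this(1)] reach_sym[OF to_y[OF this(2)]] show "reach F a b"
    by (rule rtranclp_trans)
qed

text \<open>\<open>a\<close> lies in the cluster of \<open>y\<close>, \<open>b\<close> in that of \<open>z\<close>, and \<open>p\<close>, \<open>p'\<close> are unfilled vertices next to
  them between the two clusters.\<close>

lemma two_clusters_gap:
  assumes "F \<subseteq> V" "two_clusters y z F" "y \<in> F" "z \<in> F" "\<not> reach F y z"
  obtains a b p p' where "a \<in> F" "b \<in> F" "p \<in> V - F" "p' \<in> V - F" "E a p" "E b p'"
    "a \<in> branch b p'" "p \<in> branch b p'"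
proof -
  define Y where "Y = {x \<in> F. reach F x y}"
  have closed: "a \<in> Y \<longleftrightarrow> p \<in> Y" if "a \<in> F" "p \<in> F" "E a p" for a p
  proof -
    have "reach F a p" "reach F p a"
      using that edge_sym by (auto intro: r_into_rtranclp)
    then show ?thesis
      using that by (auto simp: Y_def intro: rtranclp_trans)
  qed
  have "z \<notin> Y" "y \<in> Y"
    using assms(3,4,5) reach_sym by (auto simp: Y_def)
  obtain b p' where b: "b \<in> F - Y" "p' \<in> V - (F - Y)" "E b p'" "reach (V - (F - Y)) p' y"
    using first_exit[OF reach_V, of z y "F - Y"] assms(1,3,4) \<open>z \<notin> Y\<close> \<open>y \<in> Y\<close> by blast
  have "p' \<notin> F"
    using closed[of b p'] b(1-3) by blast
  have "V - (F - Y) \<subseteq> V - {b}"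
    using b(1) by blast
  with b(4) have "reach (V - {b}) p' y"
    by (rule reach_mono)
  then obtain a p where a: "a \<in> Y" "p \<in> V - {b} - Y" "E a p" "reach (V - {b} - Y) p p'"
    using first_exit[OF reach_sym, of "V - {b}" p' y Y] \<open>y \<in> Y\<close> \<open>p' \<notin> F\<close> by (auto simp: Y_def)
  have "p \<notin> F"
    using closed[of a p] a(1-3) by (auto simp: Y_def)
  have "reach (V - {b}) p p'"
    using a(4) by (rule reach_mono) blast
  then have p_branch: "p \<in> branch b p'"
    unfolding mem_branch_iff by (rule reach_sym)
  have "a \<in> branch b p'"
    using branch_step[OF b(3) p_branch edge_sym[OF a(3)]] a(1) b(1) by blast
  with that show ?thesis
    using a(1-3) b(1-3) \<open>p \<notin> F\<close> \<open>p' \<notin> F\<close> p_branch by (auto simp: Y_def)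
qed

lemma win_across_gap:
  assumes gap: "a \<in> F" "b \<in> F" "p \<in> V - F" "E a p" "E b p'" "a \<in> branch b p'" "p \<in> branch b p'"
    and v: "v \<in> V - F" "E b v" "v \<noteq> p'"
    and win: "zq_win V E 1 k (insert p F)" "zq_win V E 1 k (insert v F)"
  shows "zq_win V E 1 k F"
proof -
  have U1: "comp_of E (V - F) p \<subseteq> branch b p'"
    using comp_of_subset_branch[of b "V - F" p] gap(2,7) branch_trans
    by (auto simp: mem_branch_iff)
  have U2: "comp_of E (V - F) v \<subseteq> branch b v"
    using comp_of_subset_branch gap(2) by blast
  have disj: "branch b p' \<inter> branch b v = {}"
    using branches_disjoint[OF gap(5) v(2)] v(3) by blast
  have "v \<in> comp_of E (V - F) v"
    by (simp add: comp_of_def)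
  then have "comp_of E (V - F) p \<noteq> comp_of E (V - F) v"
    using U1 disj root_in_branch[of v b] by blast
  moreover have "\<forall>t\<in>comp_of E (V - F) p \<union> comp_of E (V - F) v. E a t \<longrightarrow> t = p"
  proof (intro ballI impI)
    fix t
    assume t: "t \<in> comp_of E (V - F) p \<union> comp_of E (V - F) v" "E a t"
    have "t \<notin> comp_of E (V - F) v"
      using branch_step[OF v(2) _ edge_sym[OF t(2)]] U2 disj gap(6) branch_subset[OF gap(5)]
      by blast
    then have "t \<in> branch a p"
      using t(1) comp_of_subset_branch[of a "V - F" p] gap(1) by blast
    then show "t = p"
      using neighbour_in_branch[OF gap(4) t(2)] by blast
  qed
  moreover have "\<forall>t\<in>comp_of E (V - F) v. E b t \<longrightarrow> t = v"
    using U2 neighbour_in_branch[OF v(2)] by blast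
  ultimately show ?thesis
    using zq_win_1_two_components[OF gap(1,2,3) v(1) gap(4) v(2)] win by blast
qed

lemma win_two_clusters:
  assumes "F \<subseteq> V" "F0 \<subseteq> F" "y \<in> F0" "z \<in> F0" "two_clusters y z F"
    and win: "\<And>F'. F0 \<subseteq> F' \<Longrightarrow> F' \<subseteq> V \<Longrightarrow> connected F' \<Longrightarrow> zq_win V E 1 k F'"
  shows "zq_win V E 1 k F"
  using assms(1,2,5)
proof (induction "card (V - F)" arbitrary: F rule: less_induct)
  case less
  have win_insert: "zq_win V E 1 k (insert u F)" if "u \<in> V - F" "w \<in> F" "E w u" for u w
    using less.hyps[OF card_unfilled_insert_less[OF that(1)]] less.prems that two_clusters_insert
    by blast
  have "y \<in> F" "z \<in> F"
    using assms(3,4) less.prems(2) by blast+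
  show ?case
  proof (cases "reach F y z")
    case True
    then show ?thesis
      using win two_clusters_connected less.prems by blast
  next
    case False
    obtain a b p p' where gap: "a \<in> F" "b \<in> F" "p \<in> V - F" "p' \<in> V - F" "E a p" "E b p'"
      "a \<in> branch b p'" "p \<in> branch b p'"
      using two_clusters_gap[OF less.prems(1,3) \<open>y \<in> F\<close> \<open>z \<in> F\<close> False] by blast
    show ?thesis
    proof (cases "\<exists>v\<in>V - F. E b v \<and> v \<noteq> p'")
      case False
      have "can_fill E V F p'"
        by (rule can_fillI[of _ _ _ b]) (use False gap(2,4,6) in blast)+
      then show ?thesis
        using win_insert[OF gap(4,2,6)] by (rule zq_win.fill)
    next
      case True
      then obtain v where v: "v \<in> V - F" "E b v" "v \<noteq> p'"
        by blast
      show ?thesis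
        using win_across_gap[OF gap(1,2,3,5,6,7,8) v] win_insert[OF gap(3,1,5)]
          win_insert[OF v(1) gap(2) v(2)] by blast
    qed
  qed
qed

lemma win_two_frontier_vertices:
  assumes bal: "balanced F k" and x: "x1 \<in> F" "x2 \<in> F" "x1 \<noteq> x2"
    and u: "u1 \<in> unfilled_nbrs F x1" "u2 \<in> unfilled_nbrs F x2"
    and IH: "\<And>u. u \<in> V - F \<Longrightarrow> balanced (insert u F) k \<Longrightarrow> zq_win V E 1 k (insert u F)"
  shows "zq_win V E 1 k F"
proof -
  have conn: "connected F"
    using bal by (simp add: balanced_def)
  have D1: "branch x1 u1 \<inter> F = {}" and D2: "branch x2 u2 \<inter> F = {}"
    using branch_disjoint_filled[OF conn] x u by blast+
  have U1: "comp_of E (V - F) u1 \<subseteq> branch x1 u1" and U2: "comp_of E (V - F) u2 \<subseteq> branch x2 u2"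
    using comp_of_subset_branch x by blast+
  have "u2 \<in> comp_of E (V - F) u2"
    by (simp add: comp_of_def)
  moreover have "u2 \<notin> branch x1 u1"
    using branch_step[of x1 u1 u2 x2] edge_sym u D1 x by blast
  ultimately have "comp_of E (V - F) u1 \<noteq> comp_of E (V - F) u2"
    using U1 by blast
  moreover have "\<forall>t\<in>comp_of E (V - F) u1 \<union> comp_of E (V - F) u2. E x1 t \<longrightarrow> t = u1"
  proof (intro ballI impI)
    fix t
    assume t: "t \<in> comp_of E (V - F) u1 \<union> comp_of E (V - F) u2" "E x1 t"
    have "t \<notin> branch x2 u2"
      using branch_step[of x2 u2 t x1] edge_sym t(2) u D2 x by blast
    then show "t = u1"
      using t U1 U2 neighbour_in_branch u by blast
  qed
  moreover have "\<forall>t\<in>comp_of E (V - F) u2. E x2 t \<longrightarrow> t = u2"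
    using U2 neighbour_in_branch u by blast
  ultimately show ?thesis
    using zq_win_1_two_components[of x1 F x2 u1 V u2 E] x u IH balanced_insert[OF bal] by blast
qed

lemma lone_frontier_branch:
  assumes "F \<subseteq> V" "y \<in> F" and lone: "\<And>x. x \<in> F \<Longrightarrow> x \<noteq> y \<Longrightarrow> unfilled_nbrs F x = {}"
    and "x \<in> V - F"
  obtains u where "u \<in> unfilled_nbrs F y" "x \<in> branch y u"
proof -
  obtain f u where fu: "f \<in> F" "u \<in> V - F" "E f u" "reach (V - F) u x"
    using first_exit[OF reach_V[of y x], of F] assms by blast
  have "f = y"
    using lone fu(1-3) by blast
  have "V - F \<subseteq> V - {y}"
    using assms(2) by blast
  with fu(4) have "x \<in> branch y u"
    unfolding mem_branch_iff by (rule reach_mono)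
  then show ?thesis
    using that fu(2,3) \<open>f = y\<close> by blast
qed

lemma demand_lt_after_settling:
  assumes "connected F" and FV: "F \<subseteq> V" and y: "y \<in> F" and lone: "\<And>x. x \<in> F \<Longrightarrow> x \<noteq> y \<Longrightarrow> unfilled_nbrs F x = {}"
    and w0: "w0 \<in> unfilled_nbrs F y"
      "\<And>u. u \<in> unfilled_nbrs F y \<Longrightarrow> branch_val y u \<le> branch_val y w0"
    and m: "0 < demand F y"
    and z: "z \<in> branch y w0" "settles y w0 (demand F y) z"
    and F': "insert z F \<subseteq> F'" "F' \<subseteq> V" "connected F'"
    and "x \<in> F'"
  shows "demand F' x < demand F y"
proof -
  define m where "m = demand F y"
  have rest_less: "fcomb (vals y (unfilled_nbrs F y - {w0})) < m"
    using fcomb_vals_remove_max_less[OF finite_unfilled_nbrs w0] m by (simp add: m_def demand_def)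
  consider "x = y" | "x \<in> F" "x \<noteq> y" | "x \<notin> F"
    by blast
  then show ?thesis
  proof cases
    case 1
    have "w0 \<in> F'"
      using connected_enters_branch[OF F'(3) _ _ _ z(1)] F'(1) y w0(1) by blast
    then have "demand F' y \<le> fcomb (vals y (unfilled_nbrs F y - {w0}))"
      unfolding demand_def using F'(1) finite_unfilled_nbrs[of F y]
      by (intro fcomb_mono vals_mono) auto
    then show ?thesis
      using 1 rest_less by (simp add: m_def)
  next
    case 2
    then have "demand F x = 0"
      using lone[OF 2] unfolding demand_def by (metis fcomb_empty image_mset_empty mset_set.empty)
    then show ?thesis
      using demand_antimono[of F F' x] F'(1) m by simp
  next
    case 3
    then obtain u where u: "u \<in> unfilled_nbrs F y" "x \<in> branch y u"
      using lone_frontier_branch[OF FV y lone] F'(2) \<open>x \<in> F'\<close> by blast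
    show ?thesis
    proof (cases "u = w0")
      case True
      then show ?thesis
        using settlesD[OF z(2) F'(3) _ _ \<open>x \<in> F'\<close>] F'(1) y u(2) by blast
    next
      case False
      have "branch_val y u \<le> fcomb (vals y (unfilled_nbrs F y - {w0}))"
        using u(1) False finite_unfilled_nbrs by (intro le_fcomb) simp
      then have "branch_val y u < m"
        using rest_less by simp
      moreover obtain z' where "settles y u m z'"
        using settling_vertex_exists[of y u m] u(1) m calculation by (auto simp: m_def)
      ultimately show ?thesis
        using settlesD[OF _ F'(3) _ _ \<open>x \<in> F'\<close> u(2)] F'(1) y by (auto simp: m_def)
    qed
  qed
qed

lemma win_by_token:
  assumes bal: "balanced F k" and y: "y \<in> F" "\<And>x. x \<in> F \<Longrightarrow> x \<noteq> y \<Longrightarrow> unfilled_nbrs F x = {}"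
    and u: "u1 \<in> unfilled_nbrs F y" "u2 \<in> unfilled_nbrs F y" "u1 \<noteq> u2"
    and IH: "\<And>F' k'. card (V - F') < card (V - F) \<Longrightarrow> balanced F' k' \<Longrightarrow> zq_win V E 1 k' F'"
  shows "zq_win V E 1 k F"
proof -
  have conn: "connected F" and FV: "F \<subseteq> V"
    using bal by (simp_all add: balanced_def)
  define m where "m = demand F y"
  have "0 < m"
    using fcomb_vals_gt_if_two[OF finite_unfilled_nbrs u] by (simp add: m_def demand_def)
  moreover have "m \<le> k"
    using bal y(1) by (simp add: balanced_def m_def)
  ultimately obtain k' where k': "k = Suc k'"
    using not0_implies_Suc by fastforce
  obtain w0 where w0: "w0 \<in> unfilled_nbrs F y"
    "\<And>u. u \<in> unfilled_nbrs F y \<Longrightarrow> branch_val y u \<le> branch_val y w0"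
    using finite_ex_max_on[OF finite_unfilled_nbrs, of F y "branch_val y"] u(1) by blast
  have "branch_val y w0 \<le> m"
    using branch_val_le_demand w0(1) by (simp add: m_def)
  then obtain z where z: "z \<in> branch y w0" "settles y w0 m z"
    using settling_vertex_exists[of y w0 m] w0(1) \<open>0 < m\<close> by auto
  have "z \<in> V - F"
    using z(1) branch_subset[of y w0] branch_disjoint_filled[OF conn y(1)] w0(1) by blast
  have "zq_win V E 1 k' F'" if F': "insert z F \<subseteq> F'" "F' \<subseteq> V" "connected F'" for F'
  proof (rule IH)
    have "V - F' \<subseteq> V - insert z F"
      using F'(1) by blast
    then show "card (V - F') < card (V - F)"
      using card_unfilled_insert_less[OF \<open>z \<in> V - F\<close>] card_mono[OF finite_Diff[OF finite_V]]
      by (meson le_less_trans)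
    show "balanced F' k'"
      using demand_lt_after_settling[OF conn FV y w0 _ z[unfolded m_def] F'] \<open>0 < m\<close> \<open>m \<le> k\<close> F' k'
      by (fastforce simp: balanced_def m_def)
  qed
  moreover have "two_clusters y z (insert z F)"
    using conn y(1) reach_mono[of F _ y "insert z F"] by (auto simp: two_clusters_def connected_def)
  ultimately have "zq_win V E 1 k' (insert z F)"
    using win_two_clusters[of "insert z F" "insert z F" y z] FV \<open>z \<in> V - F\<close> y(1) by blast
  then show ?thesis
    unfolding k' using \<open>z \<in> V - F\<close> by (intro zq_win.token) auto
qed

lemma win_if_balanced: "balanced F k \<Longrightarrow> zq_win V E 1 k F"
proof (induction "card (V - F)" arbitrary: F k rule: less_induct)
  case less
  note bal = less.prems
  have IH_insert: "zq_win V E 1 k (insert u F)" if "u \<in> V - F" "balanced (insert u F) k" for u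
    using less.hyps[OF card_unfilled_insert_less[OF that(1)] that(2)] .
  show ?case
  proof (cases "V \<subseteq> F")
    case True
    then show ?thesis
      by (rule zq_win.finished)
  next
    case False
    obtain a v where "a \<in> F" "v \<in> V - F"
      using bal False by (auto simp: balanced_def)
    then obtain y u where yu: "y \<in> F" "u \<in> unfilled_nbrs F y"
      using first_exit[OF reach_V[of a v], of F] bal by (auto simp: balanced_def)
    show ?thesis
    proof (cases "\<exists>x\<in>F. x \<noteq> y \<and> unfilled_nbrs F x \<noteq> {}")
      case True
      then obtain x u' where "x \<in> F" "x \<noteq> y" "u' \<in> unfilled_nbrs F x"
        by blast
      then show ?thesis
        using win_two_frontier_vertices[OF bal] yu IH_insert by blast
    next
      case lone: False
      show ?thesis
      proof (cases "unfilled_nbrs F y = {u}")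
        case True
        have "can_fill E V F u"
          by (rule can_fillI[of _ _ _ y]) (use True yu in auto)
        then show ?thesis
          using IH_insert balanced_insert[OF bal] yu by (blast intro: zq_win.fill)
      next
        case False
        then obtain u' where "u' \<in> unfilled_nbrs F y" "u' \<noteq> u"
          using yu(2) by blast
        then show ?thesis
          using win_by_token[OF bal yu(1) _ yu(2)] lone less.hyps by blast
      qed
    qed
  qed
qed

lemma win_from_vertex:
  assumes "x \<in> V"
  shows "zq_win V E 1 (Suc (froot V E x)) {}"
proof -
  have "unfilled_nbrs {x} x = {u. E x u}"
    using edge_in_V edge_irrefl by blast
  then have "balanced {x} (froot V E x)"
    using assms froot_eq[OF assms] by (simp add: balanced_def connected_def demand_def)
  then show ?thesis
    using win_if_balanced assms by (intro zq_win.token) auto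
qed

end

theorem proposition4p5:
  fixes V :: "'a set" and E :: "'a \<Rightarrow> 'a \<Rightarrow> bool"
  assumes "is_tree V E" and "card V \<ge> 3"
  shows "1 + Min (froot V E ` V) = Max (froot V E ` V)
    \<and> zq_win V E 1 (1 + Min (froot V E ` V)) {}
    \<and> Zq V E 1 \<le> 1 + Min (froot V E ` V)"
proof -
  interpret tree V E
    by (rule tree.intro) (rule assms(1))
  have "V \<noteq> {}"
    using assms(2) by auto
  then have "Min (froot V E ` V) \<in> froot V E ` V"
    using finite_V by simp
  then obtain x where x: "x \<in> V" "froot V E x = Min (froot V E ` V)"
    by (metis imageE)
  have win: "zq_win V E 1 (1 + Min (froot V E ` V)) {}"
    using win_from_vertex[OF x(1)] x(2) by simp
  then have "Zq V E 1 \<le> 1 + Min (froot V E ` V)"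
    unfolding Zq_def by (rule Least_le)
  then show ?thesis
    using Max_froot_eq_Suc_Min[OF assms(2)] win by simp
qed

end
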